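(* Assume $C$ satisfies (A1), (A2) and (A3). Then there exist $c>0$ depending only on $N_0,\kappa_2$, and $\Theta_2\ge1$ depending on $\kappa_1,\kappa_2,N_0,d,\alpha$, such that for all $\rho>0$, $\lambda>0$ and all $f\in L^2(\rho^{-1}\mathbb Z^d,\rho^{-d}\mu)$, $$\mathcal E^{\rho,\lambda}_\alpha(f,f)\le c\,\mathcal E^{\rho,\lambda\Theta_2}(f,f),\qquad\text{and in particular}\qquad \mathcal E^{\rho}_\alpha(f,f)\le c\,\mathcal E^{\rho}(f,f).$$
   Context: Fix $d\ge1$, $\alpha\in(0,2)$; $\mu$ counting measure. $C:\mathbb Z^d\times\mathbb Z^d\to[0,\infty)$ with: (A1) $C(x,y)=C(y,x)$, $C(x,x)=0$. (A2) $C(x,y)\le\kappa_1|x-y|^{-d-\alpha}$ for $x\ne y$. (A3) There are $N_0\in\mathbb N,\kappa_2>0$ such that for $x\ne y$ in $\mathbb Z^d$ there are $z_0^{(x,y)}=x,\dots,z_l^{(x,y)}=y$, $l\le N_0$, with $C(z_i^{(x,y)},z_{i+1}^{(x,y)})\ge\kappa_2|x-y|^{-d-\alpha}$; and for every $(\zeta,\xi)$ at most $N_0$ pairs $(x,y)$ have $\zeta=z_k^{(x,y)},\xi=z_{k+1}^{(x,y)}$ for some $k$. For $\rho>0$ set $C^\rho(x,y)=\rho^{d+\alpha}C(\rho x,\rho y)$ on $\rho^{-1}\mathbb Z^d$, and $\mathcal E^{\rho,\lambda}(f,f)=\frac12\sum_{x,y\in\rho^{-1}\mathbb Z^d,|x-y|\le\lambda}(f(x)-f(y))^2C^\rho(x,y)\rho^{-2d}$,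 $\mathcal E^{\rho,\lambda}_\alpha(f,f)=\frac12\sum_{x,y\in\rho^{-1}\mathbb Z^d,|x-y|\le\lambda,x\ne y}(f(x)-f(y))^2|x-y|^{-d-\alpha}\rho^{-2d}$, and $\mathcal E^\rho,\mathcal E^\rho_\alpha$ the same sums without the restriction $|x-y|\le\lambda$. *)

theory Defs
  imports "HOL-Analysis.Analysis"
begin

text \<open>Points of \<int>^d are represented as functions nat \<Rightarrow> int vanishing outside {..<d},
  so that the dimension d can be quantified inside formulas.\<close>

definition Zd :: "nat \<Rightarrow> (nat \<Rightarrow> int) set" where
  "Zd d = {k. \<forall>i\<ge>d. k i = 0}"

definition enorm :: "nat \<Rightarrow> (nat \<Rightarrow> real) \<Rightarrow> real" where
  "enorm d v = sqrt (\<Sum>i<d. (v i)^2)"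

definition zdist :: "nat \<Rightarrow> (nat \<Rightarrow> int) \<Rightarrow> (nat \<Rightarrow> int) \<Rightarrow> real" where
  "zdist d x y = enorm d (\<lambda>i. real_of_int (x i - y i))"

definition scpt :: "real \<Rightarrow> (nat \<Rightarrow> int) \<Rightarrow> (nat \<Rightarrow> real)" where
  "scpt \<rho> k = (\<lambda>i. real_of_int (k i) / \<rho>)"

text \<open>Rescaled conductance C^\<rho>(k/\<rho>, l/\<rho>) = \<rho>^{d+\<alpha>} C(k,l).\<close>
definition Crho :: "nat \<Rightarrow> real \<Rightarrow> ((nat \<Rightarrow> int) \<Rightarrow> (nat \<Rightarrow> int) \<Rightarrow> real) \<Rightarrow> real
    \<Rightarrow> (nat \<Rightarrow> int) \<Rightarrow> (nat \<Rightarrow> int) \<Rightarrow> real" where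
  "Crho d \<alpha> C \<rho> k l = \<rho> powr (real d + \<alpha>) * C k l"

text \<open>Sums of nonnegative terms are taken in ennreal (value \<infinity> allowed).\<close>
definition energy :: "nat \<Rightarrow> real \<Rightarrow> ((nat \<Rightarrow> int) \<Rightarrow> (nat \<Rightarrow> int) \<Rightarrow> bool)
    \<Rightarrow> ((nat \<Rightarrow> int) \<Rightarrow> (nat \<Rightarrow> int) \<Rightarrow> real) \<Rightarrow> ((nat \<Rightarrow> real) \<Rightarrow> real) \<Rightarrow> ennreal" where
  "energy d \<rho> P K f = ennreal (1/2) *
     infsum (\<lambda>(k,l). ennreal ((f (scpt \<rho> k) - f (scpt \<rho> l))^2 * K k l * \<rho> powr (- 2 * real d)))
       {(k,l). k \<in> Zd d \<and> l \<in> Zd d \<and> P k l}"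

text \<open>\<E>^{\<rho>,\<lambda>}(f,f): restriction |x-y| \<le> \<lambda> where |x-y| = |k-l|/\<rho>.\<close>
definition E_C_trunc where
  "E_C_trunc d \<alpha> C \<rho> lam f = energy d \<rho> (\<lambda>k l. zdist d k l / \<rho> \<le> lam) (Crho d \<alpha> C \<rho>) f"

definition E_C where
  "E_C d \<alpha> C \<rho> f = energy d \<rho> (\<lambda>k l. True) (Crho d \<alpha> C \<rho>) f"

definition E_alpha_trunc where
  "E_alpha_trunc d \<alpha> \<rho> lam f = energy d \<rho> (\<lambda>k l. k \<noteq> l \<and> zdist d k l / \<rho> \<le> lam)
     (\<lambda>k l. (zdist d k l / \<rho>) powr (- (real d + \<alpha>))) f"

definition E_alpha where
  "E_alpha d \<alpha> \<rho> f = energy d \<rho> (\<lambda>k l. k \<noteq> l)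
     (\<lambda>k l. (zdist d k l / \<rho>) powr (- (real d + \<alpha>))) f"

definition L2_lattice where
  "L2_lattice d \<rho> f \<longleftrightarrow> (\<lambda>k. (f (scpt \<rho> k))^2 * \<rho> powr (- real d)) summable_on Zd d"

definition A1 where
  "A1 d C \<longleftrightarrow> (\<forall>x\<in>Zd d. \<forall>y\<in>Zd d. C x y \<ge> 0 \<and> C x y = C y x) \<and> (\<forall>x\<in>Zd d. C x x = 0)"

definition A2 where
  "A2 d \<alpha> \<kappa>1 C \<longleftrightarrow> (\<forall>x\<in>Zd d. \<forall>y\<in>Zd d. x \<noteq> y \<longrightarrow>
      C x y \<le> \<kappa>1 * zdist d x y powr (- (real d + \<alpha>)))"

definition A3 where
  "A3 d \<alpha> N0 \<kappa>2 C \<longleftrightarrow>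
    (\<exists>(L :: (nat \<Rightarrow> int) \<Rightarrow> (nat \<Rightarrow> int) \<Rightarrow> nat)
      (Z :: (nat \<Rightarrow> int) \<Rightarrow> (nat \<Rightarrow> int) \<Rightarrow> nat \<Rightarrow> (nat \<Rightarrow> int)).
      (\<forall>x\<in>Zd d. \<forall>y\<in>Zd d. x \<noteq> y \<longrightarrow>
          L x y \<le> N0 \<and> Z x y 0 = x \<and> Z x y (L x y) = y \<and>
          (\<forall>i\<le>L x y. Z x y i \<in> Zd d) \<and>
          (\<forall>i<L x y. C (Z x y i) (Z x y (Suc i)) \<ge> \<kappa>2 * zdist d x y powr (- (real d + \<alpha>)))) \<and>
      (\<forall>\<zeta>\<in>Zd d. \<forall>\<xi>\<in>Zd d.
          finite {(x,y). x \<in> Zd d \<and> y \<in> Zd d \<and> x \<noteq> y \<and>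
                   (\<exists>k<L x y. Z x y k = \<zeta> \<and> Z x y (Suc k) = \<xi>)} \<and>
          card {(x,y). x \<in> Zd d \<and> y \<in> Zd d \<and> x \<noteq> y \<and>
                   (\<exists>k<L x y. Z x y k = \<zeta> \<and> Z x y (Suc k) = \<xi>)} \<le> N0))"

end

theory Submission
  imports Defs
begin

text \<open>Each pair \<open>x \<noteq> y\<close> is joined by a path of at most \<open>N\<^sub>0\<close> edges whose conductances are
  at least \<open>\<kappa>\<^sub>2 |x - y|\<^sup>-\<^sup>d\<^sup>-\<^sup>\<alpha>\<close>. Telescoping along the path and Cauchy-Schwarz bound
  \<open>(f x - f y)\<^sup>2 |x - y|\<^sup>-\<^sup>d\<^sup>-\<^sup>\<alpha>\<close> by \<open>N\<^sub>0/\<kappa>\<^sub>2\<close> times the \<open>C\<close>-energy of the path edges.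
  Summing over all pairs, an edge is used by at most \<open>N\<^sub>0\<close> pairs, each at most \<open>N\<^sub>0\<close> times,
  so \<open>c = N\<^sub>0\<^sup>3/\<kappa>\<^sub>2\<close> works. Comparing the lower bound on the conductance of a path edge with the
  upper bound (A2) shows that the edge has length at most \<open>(\<kappa>\<^sub>1/\<kappa>\<^sub>2)\<^sup>1\<^sup>/\<^sup>(\<^sup>d\<^sup>+\<^sup>\<alpha>\<^sup>) |x - y|\<close>,
  which yields the enlarged truncation radius \<open>\<lambda> \<Theta>\<^sub>2\<close>.\<close>

lemma sum_path_steps_le_infsum:
  fixes G :: "'b \<Rightarrow> ennreal"
  assumes "finite F"
    and steps: "\<And>p i. p \<in> F \<Longrightarrow> i < len p \<Longrightarrow> step p i \<in> B"
    and len: "\<And>p. p \<in> F \<Longrightarrow> len p \<le> N"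
    and overlap: "\<And>b. b \<in> B \<Longrightarrow> card {p\<in>F. \<exists>i<len p. step p i = b} \<le> N"
  shows "(\<Sum>p\<in>F. \<Sum>i<len p. G (step p i)) \<le> of_nat (N * N) * (\<Sum>\<^sub>\<infinity>b\<in>B. G b)"
proof -
  define A where "A = Sigma F (\<lambda>p. {..<len p})"
  define H where "H = (\<lambda>(p, i). step p i)"
  have "finite A" using \<open>finite F\<close> by (simp add: A_def)
  have "H ` A \<subseteq> B" using steps by (auto simp: A_def H_def)
  have fibre: "card {x\<in>A. H x = b} \<le> N * N" if "b \<in> B" for b
  proof -
    have "{x\<in>A. H x = b} \<subseteq> {p\<in>F. \<exists>i<len p. step p i = b} \<times> {..<N}"
      using len by (force simp: A_def H_def)
    moreover have "finite {p\<in>F. \<exists>i<len p. step p i = b}" using \<open>finite F\<close> by simp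
    ultimately have "card {x\<in>A. H x = b} \<le> card ({p\<in>F. \<exists>i<len p. step p i = b} \<times> {..<N})"
      by (intro card_mono) auto
    then have "card {x\<in>A. H x = b} \<le> card {p\<in>F. \<exists>i<len p. step p i = b} * N"
      by (simp add: card_cartesian_product)
    then show ?thesis using overlap[OF that] by (meson le_trans mult_le_mono1)
  qed
  have "(\<Sum>p\<in>F. \<Sum>i<len p. G (step p i)) = (\<Sum>x\<in>A. G (H x))"
    by (simp add: A_def H_def sum.Sigma \<open>finite F\<close> split_def)
  also have "\<dots> = (\<Sum>b\<in>H ` A. \<Sum>x\<in>{x\<in>A. H x = b}. G (H x))"
    by (rule sum.image_gen[OF \<open>finite A\<close>])
  also have "\<dots> = (\<Sum>b\<in>H ` A. of_nat (card {x\<in>A. H x = b}) * G b)"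
    by (intro sum.cong refl) simp
  also have "\<dots> \<le> (\<Sum>b\<in>H ` A. of_nat (N * N) * G b)"
    using fibre \<open>H ` A \<subseteq> B\<close> by (intro sum_mono mult_right_mono) (auto simp del: of_nat_mult)
  also have "\<dots> = of_nat (N * N) * (\<Sum>\<^sub>\<infinity>b\<in>H ` A. G b)"
    using \<open>finite A\<close> by (simp add: sum_distrib_left)
  also have "\<dots> \<le> of_nat (N * N) * (\<Sum>\<^sub>\<infinity>b\<in>B. G b)"
    using \<open>H ` A \<subseteq> B\<close> by (intro mult_left_mono infsum_mono_neutral nonneg_summable_on_complete) auto
  finally show ?thesis .
qed

lemma infsum_le_by_paths:
  fixes T :: "'a \<Rightarrow> ennreal" and G :: "'b \<Rightarrow> ennreal"
  assumes bound: "\<And>p. p \<in> S \<Longrightarrow> T p \<le> K * (\<Sum>i<len p. G (step p i))"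
    and steps: "\<And>p i. p \<in> S \<Longrightarrow> i < len p \<Longrightarrow> step p i \<in> B"
    and len: "\<And>p. p \<in> S \<Longrightarrow> len p \<le> N"
    and finite_overlap: "\<And>b. b \<in> B \<Longrightarrow> finite {p\<in>S. \<exists>i<len p. step p i = b}"
    and overlap: "\<And>b. b \<in> B \<Longrightarrow> card {p\<in>S. \<exists>i<len p. step p i = b} \<le> N"
  shows "(\<Sum>\<^sub>\<infinity>p\<in>S. T p) \<le> K * of_nat (N * N) * (\<Sum>\<^sub>\<infinity>b\<in>B. G b)"
proof (rule infsum_le_finite_sums)
  fix F assume "finite F" "F \<subseteq> S"
  have "card {p\<in>F. \<exists>i<len p. step p i = b} \<le> N" if "b \<in> B" for b
  proof -
    have "{p\<in>F. \<exists>i<len p. step p i = b} \<subseteq> {p\<in>S. \<exists>i<len p. step p i = b}"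
      using \<open>F \<subseteq> S\<close> by blast
    then show ?thesis
      by (rule le_trans[OF card_mono[OF finite_overlap[OF that]] overlap[OF that]])
  qed
  then have paths: "(\<Sum>p\<in>F. \<Sum>i<len p. G (step p i)) \<le> of_nat (N * N) * (\<Sum>\<^sub>\<infinity>b\<in>B. G b)"
    using \<open>finite F\<close> \<open>F \<subseteq> S\<close> steps len by (intro sum_path_steps_le_infsum) auto
  have "(\<Sum>p\<in>F. T p) \<le> K * (\<Sum>p\<in>F. \<Sum>i<len p. G (step p i))"
    using \<open>F \<subseteq> S\<close> bound by (auto simp: sum_distrib_left intro: sum_mono)
  also have "\<dots> \<le> K * (of_nat (N * N) * (\<Sum>\<^sub>\<infinity>b\<in>B. G b))"
    using paths by (rule mult_left_mono) simp
  finally show "(\<Sum>p\<in>F. T p) \<le> K * of_nat (N * N) * (\<Sum>\<^sub>\<infinity>b\<in>B. G b)"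
    by (simp add: mult.assoc)
qed (rule nonneg_summable_on_complete, simp)

lemma telescoping_square_le:
  fixes g c :: "nat \<Rightarrow> real" and N :: nat
  assumes "n \<le> N" "\<kappa> > 0" "w \<ge> 0" and weights: "\<And>i. i < n \<Longrightarrow> \<kappa> * w \<le> c i"
  shows "(g 0 - g n)\<^sup>2 * w \<le> real N / \<kappa> * (\<Sum>i<n. (g i - g (Suc i))\<^sup>2 * c i)"
proof -
  have "(g 0 - g n)\<^sup>2 = (\<Sum>i<n. g i - g (Suc i))\<^sup>2"
    using sum_lessThan_telescope[of "\<lambda>i. - g i" n] by simp
  also have "\<dots> \<le> (\<Sum>i<n. (g i - g (Suc i))\<^sup>2) * n"
    using sum_squared_le_sum_of_squares[of _ "{..<n}"] by simp
  also have "\<dots> \<le> (\<Sum>i<n. (g i - g (Suc i))\<^sup>2) * N"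
    using \<open>n \<le> N\<close> by (intro mult_left_mono sum_nonneg) auto
  finally have "(g 0 - g n)\<^sup>2 * w \<le> (\<Sum>i<n. (g i - g (Suc i))\<^sup>2) * N * w"
    using \<open>w \<ge> 0\<close> by (rule mult_right_mono)
  also have "\<dots> = real N / \<kappa> * ((\<Sum>i<n. (g i - g (Suc i))\<^sup>2) * (\<kappa> * w))"
    using \<open>\<kappa> > 0\<close> by (simp only: times_divide_eq_left mult_ac) simp
  also have "\<dots> = real N / \<kappa> * (\<Sum>i<n. (g i - g (Suc i))\<^sup>2 * (\<kappa> * w))"
    by (simp add: sum_distrib_right)
  also have "\<dots> \<le> real N / \<kappa> * (\<Sum>i<n. (g i - g (Suc i))\<^sup>2 * c i)"
    using weights \<open>\<kappa> > 0\<close> by (intro mult_left_mono sum_mono) (auto simp: zero_le_divide_iff)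
  finally show ?thesis .
qed

lemma zdist_nonneg: "zdist d k l \<ge> 0"
  by (simp add: zdist_def enorm_def sum_nonneg)

lemma zdist_pos:
  assumes "k \<in> Zd d" "l \<in> Zd d" "k \<noteq> l"
  shows "zdist d k l > 0"
proof -
  obtain i where "k i \<noteq> l i" using \<open>k \<noteq> l\<close> by auto
  have "i < d"
  proof (rule ccontr)
    assume "\<not> i < d"
    then have "k i = 0" "l i = 0" using assms(1,2) by (auto simp: Zd_def)
    with \<open>k i \<noteq> l i\<close> show False by simp
  qed
  have "0 < (real_of_int (k i - l i))\<^sup>2" using \<open>k i \<noteq> l i\<close> by simp
  also have "\<dots> \<le> (\<Sum>j<d. (real_of_int (k j - l j))\<^sup>2)"
    using \<open>i < d\<close> by (intro member_le_sum) auto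
  finally show ?thesis unfolding zdist_def enorm_def by simp
qed

lemma le_mult_if_powr_neg_le:
  fixes r s a \<kappa>1 \<kappa>2 :: real
  assumes "\<kappa>2 > 0" "r > 0" "s > 0" "a > 0"
    and le: "\<kappa>2 * r powr (-a) \<le> \<kappa>1 * s powr (-a)"
  shows "s \<le> (\<kappa>1 / \<kappa>2) powr (1 / a) * r"
proof -
  have "\<kappa>2 / r powr a \<le> \<kappa>1 / s powr a"
    using le by (simp add: powr_minus divide_inverse)
  then have "s powr a \<le> (\<kappa>1 / \<kappa>2) * r powr a"
    using assms(1-3) by (simp add: field_simps)
  then have "(s powr a) powr (1 / a) \<le> ((\<kappa>1 / \<kappa>2) * r powr a) powr (1 / a)"
    using \<open>a > 0\<close> by (intro powr_mono2) auto
  also have "\<dots> = (\<kappa>1 / \<kappa>2) powr (1 / a) * (r powr a) powr (1 / a)"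
    by (rule powr_mult)
  finally show ?thesis
    using assms(2-4) by (simp add: powr_powr)
qed

definition path_system ::
    "nat \<Rightarrow> real \<Rightarrow> nat \<Rightarrow> real \<Rightarrow> ((nat \<Rightarrow> int) \<Rightarrow> (nat \<Rightarrow> int) \<Rightarrow> real)
      \<Rightarrow> ((nat \<Rightarrow> int) \<Rightarrow> (nat \<Rightarrow> int) \<Rightarrow> nat)
      \<Rightarrow> ((nat \<Rightarrow> int) \<Rightarrow> (nat \<Rightarrow> int) \<Rightarrow> nat \<Rightarrow> (nat \<Rightarrow> int)) \<Rightarrow> bool" where
  "path_system d \<alpha> N0 \<kappa>2 C L Z \<longleftrightarrow>
    (\<forall>x\<in>Zd d. \<forall>y\<in>Zd d. x \<noteq> y \<longrightarrow>
        L x y \<le> N0 \<and> Z x y 0 = x \<and> Z x y (L x y) = y \<and>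
        (\<forall>i\<le>L x y. Z x y i \<in> Zd d) \<and>
        (\<forall>i<L x y. C (Z x y i) (Z x y (Suc i)) \<ge> \<kappa>2 * zdist d x y powr (- (real d + \<alpha>)))) \<and>
    (\<forall>\<zeta>\<in>Zd d. \<forall>\<xi>\<in>Zd d.
        finite {(x,y). x \<in> Zd d \<and> y \<in> Zd d \<and> x \<noteq> y \<and>
                 (\<exists>k<L x y. Z x y k = \<zeta> \<and> Z x y (Suc k) = \<xi>)} \<and>
        card {(x,y). x \<in> Zd d \<and> y \<in> Zd d \<and> x \<noteq> y \<and>
                 (\<exists>k<L x y. Z x y k = \<zeta> \<and> Z x y (Suc k) = \<xi>)} \<le> N0)"

lemma A3_iff_path_system: "A3 d \<alpha> N0 \<kappa>2 C \<longleftrightarrow> (\<exists>L Z. path_system d \<alpha> N0 \<kappa>2 C L Z)"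
  unfolding A3_def path_system_def ..

lemma path_systemD:
  assumes "path_system d \<alpha> N0 \<kappa>2 C L Z" "x \<in> Zd d" "y \<in> Zd d" "x \<noteq> y"
  shows "L x y \<le> N0" "Z x y 0 = x" "Z x y (L x y) = y" "\<And>i. i \<le> L x y \<Longrightarrow> Z x y i \<in> Zd d"
    "\<And>i. i < L x y \<Longrightarrow> C (Z x y i) (Z x y (Suc i)) \<ge> \<kappa>2 * zdist d x y powr (- (real d + \<alpha>))"
  using assms unfolding path_system_def by blast+

lemma path_system_overlap:
  assumes "path_system d \<alpha> N0 \<kappa>2 C L Z" "\<zeta> \<in> Zd d" "\<xi> \<in> Zd d"
  defines "U \<equiv> {(x,y). x \<in> Zd d \<and> y \<in> Zd d \<and> x \<noteq> y \<and>
                 (\<exists>k<L x y. Z x y k = \<zeta> \<and> Z x y (Suc k) = \<xi>)}"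
  shows "finite U" "card U \<le> N0"
  using assms unfolding path_system_def by blast+

lemma path_step_zdist_le:
  assumes paths: "path_system d \<alpha> N0 \<kappa>2 C L Z" and "A1 d C" "A2 d \<alpha> \<kappa>1 C"
    and "\<kappa>2 > 0" "real d + \<alpha> > 0"
    and "x \<in> Zd d" "y \<in> Zd d" "x \<noteq> y" "i < L x y"
  shows "zdist d (Z x y i) (Z x y (Suc i)) \<le> (\<kappa>1 / \<kappa>2) powr (1 / (real d + \<alpha>)) * zdist d x y"
proof -
  let ?a = "real d + \<alpha>" and ?u = "Z x y i" and ?v = "Z x y (Suc i)"
  note path = path_systemD[OF paths \<open>x \<in> Zd d\<close> \<open>y \<in> Zd d\<close> \<open>x \<noteq> y\<close>]
  have "?u \<in> Zd d" "?v \<in> Zd d" using path(4) \<open>i < L x y\<close> by auto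
  have "zdist d x y > 0" using zdist_pos assms(6-8) by blast
  have lower: "\<kappa>2 * zdist d x y powr (-?a) \<le> C ?u ?v" using path(5) \<open>i < L x y\<close> .
  moreover have "\<kappa>2 * zdist d x y powr (-?a) > 0" using \<open>\<kappa>2 > 0\<close> \<open>zdist d x y > 0\<close> by simp
  ultimately have "?u \<noteq> ?v" using \<open>A1 d C\<close> \<open>?u \<in> Zd d\<close> by (auto simp: A1_def)
  then have "zdist d ?u ?v > 0" using \<open>?u \<in> Zd d\<close> \<open>?v \<in> Zd d\<close> by (rule zdist_pos[rotated 2])
  have "C ?u ?v \<le> \<kappa>1 * zdist d ?u ?v powr (-?a)"
    using \<open>A2 d \<alpha> \<kappa>1 C\<close> \<open>?u \<in> Zd d\<close> \<open>?v \<in> Zd d\<close> \<open>?u \<noteq> ?v\<close> by (auto simp: A2_def)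
  with lower have "\<kappa>2 * zdist d x y powr (-?a) \<le> \<kappa>1 * zdist d ?u ?v powr (-?a)" by linarith
  with \<open>zdist d x y > 0\<close> \<open>zdist d ?u ?v > 0\<close> assms(4,5) show ?thesis
    by (intro le_mult_if_powr_neg_le)
qed

lemma powr_neg_divide:
  fixes z a :: real
  assumes "\<rho> > 0"
  shows "(z / \<rho>) powr (-a) = \<rho> powr a * z powr (-a)"
proof -
  have "(z / \<rho>) powr (-a) = z powr (-a) / \<rho> powr (-a)"
    using assms by (simp add: powr_divide)
  also have "\<rho> powr (-a) = inverse (\<rho> powr a)" by (rule powr_minus)
  finally show ?thesis by (simp add: divide_inverse mult.commute)
qed

lemma pair_energy_le_path_energy:
  assumes paths: "path_system d \<alpha> N0 \<kappa>2 C L Z" and "\<kappa>2 > 0" "\<rho> > 0"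
    and "k \<in> Zd d" "l \<in> Zd d" "k \<noteq> l"
  shows "(f (scpt \<rho> k) - f (scpt \<rho> l))\<^sup>2 * (zdist d k l / \<rho>) powr (- (real d + \<alpha>)) * \<rho> powr (- 2 * real d)
    \<le> real N0 / \<kappa>2 * (\<Sum>i<L k l. (f (scpt \<rho> (Z k l i)) - f (scpt \<rho> (Z k l (Suc i))))\<^sup>2
                                  * Crho d \<alpha> C \<rho> (Z k l i) (Z k l (Suc i)) * \<rho> powr (- 2 * real d))"
proof -
  let ?a = "real d + \<alpha>" and ?m = "\<rho> powr (- 2 * real d)"
  note path = path_systemD[OF paths \<open>k \<in> Zd d\<close> \<open>l \<in> Zd d\<close> \<open>k \<noteq> l\<close>]
  define g where "g i = f (scpt \<rho> (Z k l i))" for i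
  have "(g 0 - g (L k l))\<^sup>2 * ((zdist d k l / \<rho>) powr (-?a) * ?m)
    \<le> real N0 / \<kappa>2 * (\<Sum>i<L k l. (g i - g (Suc i))\<^sup>2 * (Crho d \<alpha> C \<rho> (Z k l i) (Z k l (Suc i)) * ?m))"
  proof (rule telescoping_square_le)
    fix i assume "i < L k l"
    have "\<kappa>2 * (zdist d k l / \<rho>) powr (-?a) = \<rho> powr ?a * (\<kappa>2 * zdist d k l powr (-?a))"
      unfolding powr_neg_divide[OF \<open>\<rho> > 0\<close>] by (simp only: mult_ac)
    also have "\<dots> \<le> \<rho> powr ?a * C (Z k l i) (Z k l (Suc i))"
      using path(5) \<open>i < L k l\<close> by (intro mult_left_mono) auto
    finally show "\<kappa>2 * ((zdist d k l / \<rho>) powr (-?a) * ?m) \<le> Crho d \<alpha> C \<rho> (Z k l i) (Z k l (Suc i)) * ?m"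
      unfolding Crho_def mult.assoc[symmetric] by (intro mult_right_mono) auto
  qed (use path \<open>\<kappa>2 > 0\<close> in auto)
  then show ?thesis using path by (simp add: g_def mult.assoc)
qed

lemma ennreal_le_mult_sum_ennreal:
  assumes "x \<le> K * (\<Sum>i\<in>I. y i)" "K \<ge> 0" "\<And>i. i \<in> I \<Longrightarrow> y i \<ge> 0"
  shows "ennreal x \<le> ennreal K * (\<Sum>i\<in>I. ennreal (y i))"
proof -
  have "ennreal x \<le> ennreal (K * (\<Sum>i\<in>I. y i))"
    using assms(1) by (rule ennreal_leI)
  also have "\<dots> = ennreal K * ennreal (\<Sum>i\<in>I. y i)"
    using assms(2) by (rule ennreal_mult')
  also have "ennreal (\<Sum>i\<in>I. y i) = (\<Sum>i\<in>I. ennreal (y i))"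
    using assms(3) by (rule sum_ennreal[symmetric])
  finally show ?thesis .
qed

lemma energy_alpha_le_energy_C:
  assumes paths: "path_system d \<alpha> N0 \<kappa>2 C L Z" and "\<kappa>2 > 0" "\<rho> > 0"
    and C_nonneg: "\<And>x y. x \<in> Zd d \<Longrightarrow> y \<in> Zd d \<Longrightarrow> C x y \<ge> 0"
    and P_off_diagonal: "\<And>k l. P k l \<Longrightarrow> k \<noteq> l"
    and P_steps_Q: "\<And>k l i. k \<in> Zd d \<Longrightarrow> l \<in> Zd d \<Longrightarrow> P k l \<Longrightarrow> i < L k l \<Longrightarrow>
                      Q (Z k l i) (Z k l (Suc i))"
  shows "energy d \<rho> P (\<lambda>k l. (zdist d k l / \<rho>) powr (- (real d + \<alpha>))) f
           \<le> ennreal (real N0 ^ 3 / \<kappa>2) * energy d \<rho> Q (Crho d \<alpha> C \<rho>) f"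
proof -
  let ?S = "{(k, l). k \<in> Zd d \<and> l \<in> Zd d \<and> P k l}"
  let ?B = "{(k, l). k \<in> Zd d \<and> l \<in> Zd d \<and> Q k l}"
  define u where "u = (\<lambda>(k, l). (f (scpt \<rho> k) - f (scpt \<rho> l))\<^sup>2
                          * (zdist d k l / \<rho>) powr (- (real d + \<alpha>)) * \<rho> powr (- 2 * real d))"
  define v where "v = (\<lambda>(k, l). (f (scpt \<rho> k) - f (scpt \<rho> l))\<^sup>2
                          * Crho d \<alpha> C \<rho> k l * \<rho> powr (- 2 * real d))"
  define len where "len = (\<lambda>(k, l). L k l)"
  define step where "step = (\<lambda>(k, l) i. (Z k l i, Z k l (Suc i)))"
  have steps: "step p i \<in> ?B" if "p \<in> ?S" "i < len p" for p i
    using that P_steps_Q path_systemD(4)[OF paths] P_off_diagonal by (auto simp: step_def len_def)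
  have "(\<Sum>\<^sub>\<infinity>p\<in>?S. ennreal (u p))
          \<le> ennreal (real N0 / \<kappa>2) * of_nat (N0 * N0) * (\<Sum>\<^sub>\<infinity>b\<in>?B. ennreal (v b))"
  proof (rule infsum_le_by_paths[where len = len and step = step])
    fix p assume "p \<in> ?S"
    then obtain k l where p: "p = (k, l)" "k \<in> Zd d" "l \<in> Zd d" "P k l" by auto
    have "v (step p i) \<ge> 0" if "i < len p" for i
      using steps[OF \<open>p \<in> ?S\<close> that] C_nonneg \<open>\<rho> > 0\<close> by (auto simp: v_def Crho_def)
    moreover have "u p \<le> real N0 / \<kappa>2 * (\<Sum>i<len p. v (step p i))"
      using pair_energy_le_path_energy[OF paths \<open>\<kappa>2 > 0\<close> \<open>\<rho> > 0\<close> p(2,3) P_off_diagonal[OF p(4)]]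
      by (simp add: p u_def v_def len_def step_def)
    ultimately show "ennreal (u p) \<le> ennreal (real N0 / \<kappa>2) * (\<Sum>i<len p. ennreal (v (step p i)))"
      using \<open>\<kappa>2 > 0\<close> by (intro ennreal_le_mult_sum_ennreal) auto
  next
    fix p assume "p \<in> ?S"
    then show "len p \<le> N0" using path_systemD(1)[OF paths] P_off_diagonal by (auto simp: len_def)
  next
    fix b assume "b \<in> ?B"
    then obtain \<zeta> \<xi> where b: "b = (\<zeta>, \<xi>)" "\<zeta> \<in> Zd d" "\<xi> \<in> Zd d" by auto
    have "{p \<in> ?S. \<exists>i<len p. step p i = b} \<subseteq> {(x, y). x \<in> Zd d \<and> y \<in> Zd d \<and> x \<noteq> y \<and>
                 (\<exists>k<L x y. Z x y k = \<zeta> \<and> Z x y (Suc k) = \<xi>)}"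
      using P_off_diagonal by (auto simp: len_def step_def b(1))
    with path_system_overlap[OF paths b(2,3)]
    show "finite {p \<in> ?S. \<exists>i<len p. step p i = b}" "card {p \<in> ?S. \<exists>i<len p. step p i = b} \<le> N0"
      by (auto intro: finite_subset card_mono[THEN le_trans])
  qed (fact steps)
  also have "ennreal (real N0 / \<kappa>2) * of_nat (N0 * N0) = ennreal (real N0 / \<kappa>2 * real (N0 * N0))"
    by (simp only: ennreal_of_nat_eq_real_of_nat ennreal_mult'' of_nat_0_le_iff)
  also have "\<dots> = ennreal (real N0 ^ 3 / \<kappa>2)"
    by (rule arg_cong[where f = ennreal]) (simp add: power3_eq_cube)
  finally have "(\<Sum>\<^sub>\<infinity>p\<in>?S. ennreal (u p)) \<le> ennreal (real N0 ^ 3 / \<kappa>2) * (\<Sum>\<^sub>\<infinity>b\<in>?B. ennreal (v b))" .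
  then have "ennreal (1/2) * (\<Sum>\<^sub>\<infinity>p\<in>?S. ennreal (u p))
      \<le> ennreal (1/2) * (ennreal (real N0 ^ 3 / \<kappa>2) * (\<Sum>\<^sub>\<infinity>b\<in>?B. ennreal (v b)))"
    by (rule mult_left_mono) simp
  then show ?thesis
    unfolding energy_def u_def v_def by (simp only: split_def mult.left_commute)
qed

lemma
  fixes f :: "(nat \<Rightarrow> real) \<Rightarrow> real"
  assumes "A1 d C" "A2 d \<alpha> \<kappa>1 C" "A3 d \<alpha> N0 \<kappa>2 C" "\<kappa>2 > 0" "real d + \<alpha> > 0" "\<rho> > 0"
  shows E_alpha_trunc_le_E_C_trunc:
      "E_alpha_trunc d \<alpha> \<rho> lam f
         \<le> ennreal (real N0 ^ 3 / \<kappa>2)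
             * E_C_trunc d \<alpha> C \<rho> (lam * max 1 ((\<kappa>1 / \<kappa>2) powr (1 / (real d + \<alpha>)))) f"
    and E_alpha_le_E_C: "E_alpha d \<alpha> \<rho> f \<le> ennreal (real N0 ^ 3 / \<kappa>2) * E_C d \<alpha> C \<rho> f"
proof -
  let ?\<Theta> = "max 1 ((\<kappa>1 / \<kappa>2) powr (1 / (real d + \<alpha>)))"
  obtain L Z where paths: "path_system d \<alpha> N0 \<kappa>2 C L Z"
    using \<open>A3 d \<alpha> N0 \<kappa>2 C\<close> by (auto simp: A3_iff_path_system)
  have "\<And>x y. x \<in> Zd d \<Longrightarrow> y \<in> Zd d \<Longrightarrow> C x y \<ge> 0"
    using \<open>A1 d C\<close> by (simp add: A1_def)
  note comparison = energy_alpha_le_energy_C[OF paths \<open>\<kappa>2 > 0\<close> \<open>\<rho> > 0\<close> this]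
  have short_steps: "zdist d (Z k l i) (Z k l (Suc i)) / \<rho> \<le> lam * ?\<Theta>"
    if "k \<in> Zd d" "l \<in> Zd d" "k \<noteq> l" "zdist d k l / \<rho> \<le> lam" "i < L k l" for k l i
  proof -
    have "zdist d (Z k l i) (Z k l (Suc i)) \<le> (\<kappa>1 / \<kappa>2) powr (1 / (real d + \<alpha>)) * zdist d k l"
      using path_step_zdist_le[OF paths assms(1,2,4,5) that(1-3,5)] .
    also have "\<dots> \<le> ?\<Theta> * zdist d k l"
      by (intro mult_right_mono zdist_nonneg) simp
    also have "\<dots> \<le> ?\<Theta> * (lam * \<rho>)"
      using that(4) \<open>\<rho> > 0\<close> by (intro mult_left_mono) (auto simp: pos_divide_le_eq)
    finally show ?thesis
      using \<open>\<rho> > 0\<close> by (simp add: pos_divide_le_eq mult_ac)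
  qed
  show "E_alpha_trunc d \<alpha> \<rho> lam f \<le> ennreal (real N0 ^ 3 / \<kappa>2) * E_C_trunc d \<alpha> C \<rho> (lam * ?\<Theta>) f"
    unfolding E_alpha_trunc_def E_C_trunc_def by (rule comparison) (use short_steps in auto)
  show "E_alpha d \<alpha> \<rho> f \<le> ennreal (real N0 ^ 3 / \<kappa>2) * E_C d \<alpha> C \<rho> f"
    unfolding E_alpha_def E_C_def by (rule comparison) auto
qed

theorem lemma3p1:
  fixes N0 :: nat and \<kappa>2 :: real
  assumes "\<kappa>2 > 0"
  shows "\<exists>c>0. \<forall>(d::nat) (\<alpha>::real) (\<kappa>1::real).
     1 \<le> d \<longrightarrow> 0 < \<alpha> \<longrightarrow> \<alpha> < 2 \<longrightarrow>
     (\<exists>\<Theta>2\<ge>1. \<forall>C. A1 d C \<longrightarrow> A2 d \<alpha> \<kappa>1 C \<longrightarrow> A3 d \<alpha> N0 \<kappa>2 C \<longrightarrow>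
        (\<forall>\<rho>>0. \<forall>lam>0. \<forall>f. L2_lattice d \<rho> f \<longrightarrow>
           E_alpha_trunc d \<alpha> \<rho> lam f \<le> ennreal c * E_C_trunc d \<alpha> C \<rho> (lam * \<Theta>2) f \<and>
           E_alpha d \<alpha> \<rho> f \<le> ennreal c * E_C d \<alpha> C \<rho> f))"
proof -
  define c where "c = (real N0 ^ 3 + 1) / \<kappa>2"
  have "c > 0" using assms by (simp add: c_def add_nonneg_pos)
  have "ennreal (real N0 ^ 3 / \<kappa>2) \<le> ennreal c"
    using assms by (intro ennreal_leI) (simp add: c_def divide_right_mono)
  then have weaken: "x \<le> ennreal c * y" if "x \<le> ennreal (real N0 ^ 3 / \<kappa>2) * y" for x y
    using that by (meson mult_right_mono order_trans zero_le)
  show ?thesis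
  proof (rule exI[of _ c], intro conjI allI impI \<open>c > 0\<close>)
    fix d :: nat and \<alpha> \<kappa>1 :: real
    assume "1 \<le> d" "0 < \<alpha>" "\<alpha> < 2"
    with assms show "\<exists>\<Theta>2\<ge>1. \<forall>C. A1 d C \<longrightarrow> A2 d \<alpha> \<kappa>1 C \<longrightarrow> A3 d \<alpha> N0 \<kappa>2 C \<longrightarrow>
        (\<forall>\<rho>>0. \<forall>lam>0. \<forall>f. L2_lattice d \<rho> f \<longrightarrow>
           E_alpha_trunc d \<alpha> \<rho> lam f \<le> ennreal c * E_C_trunc d \<alpha> C \<rho> (lam * \<Theta>2) f \<and>
           E_alpha d \<alpha> \<rho> f \<le> ennreal c * E_C d \<alpha> C \<rho> f)"
      by (intro exI[of _ "max 1 ((\<kappa>1 / \<kappa>2) powr (1 / (real d + \<alpha>)))"] conjI allI impI max.cobounded1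
          weaken[OF E_alpha_trunc_le_E_C_trunc] weaken[OF E_alpha_le_E_C]) auto
  qed
qed

end
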